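(* For every integer $n\ge 1$, the number of parking graphs on the vertex set $[n]=\{1,\dots,n\}$ is exactly $(n+1)^{n-1}$.
   Context: A mixed graph may contain both undirected and directed edges. A parking graph $P$ on $[n]$ is a mixed graph with vertex set $[n]$ in which every pair $\{j,k\}$ with $1\le j<k\le n$ is joined by exactly one edge, which is of exactly one of three types: a down edge $j\leftarrow k$ (directed from $k$ to $j$), an up edge $j\rightarrow k$ (directed from $j$ to $k$), or a downish edge $jk$ (undirected). Let $\vec P$ be the directed graph (a tournament on $[n]$) obtained from $P$ by keeping all directed edges and replacing every downish edge $jk$ ($j<k$) by the directed edge $j\leftarrow k$. $P$ must satisfy the source-sink condition: (i) $\vec P$ is acyclic (contains no directed cycle), and (ii) for every triangle (set of three vertices) of $P$ among whose three edges there is at least one down edge and at least one downish edge, the source (vertex of in-degree $0$ within the triangle in $\vec P$) and the sink (vertex of out-degree $0$ within the triangle in $\vec P$) are not joined by a downish edge in $P$. *)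

theory Defs
  imports Main
begin

datatype etype = Down | Up | Downish

text \<open>A mixed graph on [n] with exactly one edge per pair {j,k}, j<k, is encoded by a
function P with P j k the type of the edge between j and k (for 1 \<le> j < k \<le> n).
Down: j \<leftarrow> k, Up: j \<rightarrow> k, Downish: undirected jk.
Values outside the domain are fixed to Down so that graphs correspond bijectively to functions.\<close>

definition edge_assignments :: "nat \<Rightarrow> (nat \<Rightarrow> nat \<Rightarrow> etype) set" where
  "edge_assignments n = {P. \<forall>j k. \<not> (1 \<le> j \<and> j < k \<and> k \<le> n) \<longrightarrow> P j k = Down}"

definition etp :: "(nat \<Rightarrow> nat \<Rightarrow> etype) \<Rightarrow> nat \<Rightarrow> nat \<Rightarrow> etype" where
  "etp P x y = (if x < y then P x y else P y x)"

text \<open>Arc x \<rightarrow> y in the tournament \<vec>P (downish edges jk, j<k, become k \<rightarrow> j).\<close>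
definition arc :: "(nat \<Rightarrow> nat \<Rightarrow> etype) \<Rightarrow> nat \<Rightarrow> nat \<Rightarrow> bool" where
  "arc P x y = ((x < y \<and> P x y = Up) \<or> (y < x \<and> P y x \<noteq> Up))"

definition arc_rel :: "nat \<Rightarrow> (nat \<Rightarrow> nat \<Rightarrow> etype) \<Rightarrow> nat rel" where
  "arc_rel n P = {(x, y). x \<in> {1..n} \<and> y \<in> {1..n} \<and> x \<noteq> y \<and> arc P x y}"

text \<open>Source-sink condition. In an acyclic tournament each triangle {s,m,t} is transitive with
source s and sink t exactly when s \<rightarrow> m, m \<rightarrow> t, s \<rightarrow> t.\<close>
definition source_sink :: "nat \<Rightarrow> (nat \<Rightarrow> nat \<Rightarrow> etype) \<Rightarrow> bool" where
  "source_sink n P =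
    (acyclic (arc_rel n P) \<and>
     (\<forall>s\<in>{1..n}. \<forall>m\<in>{1..n}. \<forall>t\<in>{1..n}.
        s \<noteq> m \<and> m \<noteq> t \<and> s \<noteq> t \<and> arc P s m \<and> arc P m t \<and> arc P s t \<and>
        Down \<in> {etp P s m, etp P m t, etp P s t} \<and>
        Downish \<in> {etp P s m, etp P m t, etp P s t}
        \<longrightarrow> etp P s t \<noteq> Downish))"

definition parking_graphs :: "nat \<Rightarrow> (nat \<Rightarrow> nat \<Rightarrow> etype) set" where
  "parking_graphs n = {P \<in> edge_assignments n. source_sink n P}"

end

theory Submission
  imports Defs "HOL-Library.FuncSet"
begin

text \<open>Parking graphs and parking functions on a vertex set \<open>V\<close> are compared through a common
  statistic, a word over \<open>V\<close>. For a parking graph it lists the vertices in the order of the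
  acyclic tournament, stopping before the first vertex that is the lower end of a down edge; for a
  parking function it lists, for the spots \<open>0, 1, \<dots>\<close> up to the first spot nobody prefers,
  the largest car preferring that spot. In both cases deleting the first letter \<open>u\<close> (the source
  of the tournament, resp. the largest car preferring spot \<open>0\<close>) is a bijection from the objects
  with word \<open>u # \<tau>\<close> onto the objects on \<open>V - {u}\<close> whose word is \<open>\<tau>\<close> or extends
  \<open>\<tau>\<close> by a letter smaller than \<open>u\<close>. On the graph side this works because the triangle
  condition forces the downish neighbours of the source to be exactly the vertices below \<open>u\<close>
  among the first \<open>length \<tau>\<close> vertices of the tournament order. By induction on \<open>card V\<close>
  all fibres of the two words have equal size. Parking functions are then counted by Pollak's
  argument: of the \<open>n + 1\<close> cyclic shifts modulo \<open>n + 1\<close> of a map \<open>V \<rightarrow> {0, \<dots>, n}\<close>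
  exactly one is a parking function.\<close>

section \<open>Parking graphs on an arbitrary vertex set\<close>

lemma arc_total: "x \<noteq> y \<Longrightarrow> arc P x y \<or> arc P y x"
  unfolding arc_def by (cases "x < y") auto

lemma arc_asym: "arc P x y \<Longrightarrow> \<not> arc P y x"
  unfolding arc_def by auto

lemma arc_irrefl: "\<not> arc P x x"
  unfolding arc_def by auto

definition assignments_on :: "nat set \<Rightarrow> (nat \<Rightarrow> nat \<Rightarrow> etype) set" where
  "assignments_on V = {P. \<forall>j k. \<not> (j \<in> V \<and> k \<in> V \<and> j < k) \<longrightarrow> P j k = Down}"

definition arc_trans_on :: "nat set \<Rightarrow> (nat \<Rightarrow> nat \<Rightarrow> etype) \<Rightarrow> bool" where
  "arc_trans_on V P = (\<forall>x\<in>V. \<forall>y\<in>V. \<forall>z\<in>V. arc P x y \<and> arc P y z \<longrightarrow> arc P x z)"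

definition triangle_cond :: "nat set \<Rightarrow> (nat \<Rightarrow> nat \<Rightarrow> etype) \<Rightarrow> bool" where
  "triangle_cond V P = (\<forall>s\<in>V. \<forall>m\<in>V. \<forall>t\<in>V. arc P s m \<and> arc P m t \<and> etp P s t = Downish
       \<longrightarrow> etp P s m \<noteq> Down \<and> etp P m t \<noteq> Down)"

definition parking_graphs_on :: "nat set \<Rightarrow> (nat \<Rightarrow> nat \<Rightarrow> etype) set" where
  "parking_graphs_on V = {P \<in> assignments_on V. arc_trans_on V P \<and> triangle_cond V P}"

lemma acyclic_arc_rel_iff: "acyclic (arc_rel n P) \<longleftrightarrow> arc_trans_on {1..n} P"
proof
  assume acyc: "acyclic (arc_rel n P)"
  show "arc_trans_on {1..n} P" unfolding arc_trans_on_def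
  proof (intro ballI impI)
    fix x y z assume V: "x \<in> {1..n}" "y \<in> {1..n}" "z \<in> {1..n}" and a: "arc P x y \<and> arc P y z"
    show "arc P x z"
    proof (rule ccontr)
      assume "\<not> arc P x z"
      with a have "arc P z x" by (metis arc_asym arc_total)
      with a V have "(x, y) \<in> arc_rel n P" "(y, z) \<in> arc_rel n P" "(z, x) \<in> arc_rel n P"
        unfolding arc_rel_def by (auto simp: arc_irrefl dest: arc_asym)
      then have "(x, x) \<in> (arc_rel n P)\<^sup>+" by (meson trancl.simps)
      with acyc show False unfolding acyclic_def by blast
    qed
  qed
next
  assume trans: "arc_trans_on {1..n} P"
  have "trans (arc_rel n P)"
  proof (rule transI)
    fix x y z assume "(x, y) \<in> arc_rel n P" "(y, z) \<in> arc_rel n P"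
    with trans show "(x, z) \<in> arc_rel n P"
      unfolding arc_trans_on_def arc_rel_def by (blast dest: arc_asym)
  qed
  then show "acyclic (arc_rel n P)"
    unfolding acyclic_def trancl_id[OF \<open>trans (arc_rel n P)\<close>] arc_rel_def by auto
qed

lemma source_sink_iff:
  "source_sink n P \<longleftrightarrow> arc_trans_on {1..n} P \<and> triangle_cond {1..n} P"
proof (cases "arc_trans_on {1..n} P")
  case True
  have "s \<noteq> m \<and> m \<noteq> t \<and> s \<noteq> t \<and> arc P s t"
    if "s \<in> {1..n}" "m \<in> {1..n}" "t \<in> {1..n}" "arc P s m" "arc P m t" for s m t
    using that True unfolding arc_trans_on_def by (metis arc_asym arc_irrefl)
  then show ?thesis
    using True unfolding source_sink_def triangle_cond_def acyclic_arc_rel_iff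
    by (smt (verit) etype.distinct insert_iff singletonD)
qed (simp add: source_sink_def acyclic_arc_rel_iff)

lemma parking_graphs_eq: "parking_graphs n = parking_graphs_on {1..n}"
  unfolding parking_graphs_def parking_graphs_on_def edge_assignments_def assignments_on_def
    source_sink_iff by auto

section \<open>The rank order of a transitive tournament\<close>

definition rank :: "nat set \<Rightarrow> (nat \<Rightarrow> nat \<Rightarrow> etype) \<Rightarrow> nat \<Rightarrow> nat" where
  "rank V P x = card {y\<in>V. arc P y x}"

definition vertex_of_rank :: "nat set \<Rightarrow> (nat \<Rightarrow> nat \<Rightarrow> etype) \<Rightarrow> nat \<Rightarrow> nat" where
  "vertex_of_rank V P i = (THE x. x \<in> V \<and> rank V P x = i)"

lemma rank_less:
  assumes "finite V" "arc_trans_on V P" "x \<in> V" "y \<in> V" "arc P x y"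
  shows "rank V P x < rank V P y"
proof -
  have "{z\<in>V. arc P z x} \<subset> {z\<in>V. arc P z y}"
    using assms(2-5) arc_irrefl unfolding arc_trans_on_def by blast
  then show ?thesis
    unfolding rank_def using assms(1) by (simp add: psubset_card_mono)
qed

lemma rank_lt_card:
  assumes "finite V" "x \<in> V"
  shows "rank V P x < card V"
proof -
  have "{z\<in>V. arc P z x} \<subset> V" using assms(2) arc_irrefl by blast
  then show ?thesis unfolding rank_def using assms(1) by (simp add: psubset_card_mono)
qed

lemma arc_iff_rank_less:
  assumes "finite V" "arc_trans_on V P" "x \<in> V" "y \<in> V"
  shows "arc P x y \<longleftrightarrow> rank V P x < rank V P y"
  using rank_less[OF assms] rank_less[OF assms(1,2,4,3)] arc_total[of x y P] by fastforce

lemma rank_eq_iff: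
  assumes "finite V" "arc_trans_on V P" "x \<in> V" "y \<in> V"
  shows "rank V P x = rank V P y \<longleftrightarrow> x = y"
  using rank_less[OF assms] rank_less[OF assms(1,2,4,3)] arc_total[of x y P] by fastforce

lemma bij_betw_rank:
  assumes "finite V" "arc_trans_on V P"
  shows "bij_betw (rank V P) V {..<card V}"
proof -
  have inj: "inj_on (rank V P) V"
    using rank_eq_iff[OF assms] by (auto intro: inj_onI)
  moreover have "rank V P ` V = {..<card V}"
    using rank_lt_card[OF assms(1)] card_image[OF inj]
    by (intro card_seteq) auto
  ultimately show ?thesis by (simp add: bij_betw_def)
qed

lemma vertex_of_rank_spec:
  assumes "finite V" "arc_trans_on V P" "i < card V"
  shows "vertex_of_rank V P i \<in> V" "rank V P (vertex_of_rank V P i) = i"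
proof -
  obtain x where x: "x \<in> V" "rank V P x = i"
    using bij_betw_rank[OF assms(1,2)] assms(3) by (metis bij_betw_iff_bijections lessThan_iff)
  then have "vertex_of_rank V P i = x"
    unfolding vertex_of_rank_def using rank_eq_iff[OF assms(1,2)] by blast
  then show "vertex_of_rank V P i \<in> V" "rank V P (vertex_of_rank V P i) = i" using x by simp_all
qed

lemma vertex_of_rank_rank:
  assumes "finite V" "arc_trans_on V P" "x \<in> V"
  shows "vertex_of_rank V P (rank V P x) = x"
  using vertex_of_rank_spec[OF assms(1,2) rank_lt_card[OF assms(1,3)]] rank_eq_iff[OF assms(1,2)] assms(3)
  by blast

section \<open>Deleting and adding a source\<close>

definition delete_vertex :: "nat \<Rightarrow> (nat \<Rightarrow> nat \<Rightarrow> etype) \<Rightarrow> nat \<Rightarrow> nat \<Rightarrow> etype" where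
  "delete_vertex u P = (\<lambda>j k. if j = u \<or> k = u then Down else P j k)"

definition add_source ::
    "nat \<Rightarrow> nat set \<Rightarrow> nat set \<Rightarrow> (nat \<Rightarrow> nat \<Rightarrow> etype) \<Rightarrow> nat \<Rightarrow> nat \<Rightarrow> etype" where
  "add_source u A V P = (\<lambda>j k.
     if k = u \<and> j \<in> V \<and> j < u then (if j \<in> A then Downish else Down)
     else if j = u \<and> k \<in> V \<and> u < k then Up else P j k)"

lemma arc_delete_vertex: "x \<noteq> u \<Longrightarrow> y \<noteq> u \<Longrightarrow> arc (delete_vertex u P) x y = arc P x y"
  unfolding arc_def delete_vertex_def by auto

lemma etp_delete_vertex: "x \<noteq> u \<Longrightarrow> y \<noteq> u \<Longrightarrow> etp (delete_vertex u P) x y = etp P x y"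
  unfolding etp_def delete_vertex_def by auto

lemma arc_add_source: "x \<noteq> u \<Longrightarrow> y \<noteq> u \<Longrightarrow> arc (add_source u A V P) x y = arc P x y"
  unfolding arc_def add_source_def by auto

lemma etp_add_source: "x \<noteq> u \<Longrightarrow> y \<noteq> u \<Longrightarrow> etp (add_source u A V P) x y = etp P x y"
  unfolding etp_def add_source_def by auto

lemma arc_from_added_source: "y \<in> V \<Longrightarrow> y \<noteq> u \<Longrightarrow> arc (add_source u A V P) u y"
  unfolding arc_def add_source_def by (cases "y < u") auto

lemma no_arc_to_added_source: "y \<in> insert u V \<Longrightarrow> \<not> arc (add_source u A V P) y u"
  using arc_from_added_source[of y V u A P] arc_asym arc_irrefl by blast

lemma etp_from_added_source:
  "t \<in> V \<Longrightarrow> t \<noteq> u \<Longrightarrow>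
   etp (add_source u A V P) u t = (if t < u then (if t \<in> A then Downish else Down) else Up)"
  unfolding etp_def add_source_def by auto

lemma add_source_in_assignments:
  "P \<in> assignments_on V \<Longrightarrow> u \<notin> V \<Longrightarrow> add_source u A V P \<in> assignments_on (insert u V)"
  unfolding assignments_on_def add_source_def by auto

lemma delete_vertex_in_assignments:
  "P \<in> assignments_on V \<Longrightarrow> delete_vertex u P \<in> assignments_on (V - {u})"
  unfolding assignments_on_def delete_vertex_def by auto

lemma delete_add_source:
  "P \<in> assignments_on V \<Longrightarrow> u \<notin> V \<Longrightarrow> delete_vertex u (add_source u A V P) = P"
  unfolding assignments_on_def add_source_def delete_vertex_def by (auto intro!: ext)

lemma add_source_delete_vertex:
  assumes "P \<in> assignments_on V" "u \<in> V" "\<forall>y\<in>V - {u}. arc P u y"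
  shows "add_source u {j\<in>V - {u}. j < u \<and> P j u = Downish} (V - {u}) (delete_vertex u P) = P"
proof (intro ext)
  fix j k
  show "add_source u {j\<in>V - {u}. j < u \<and> P j u = Downish} (V - {u}) (delete_vertex u P) j k
      = P j k"
  proof (cases "k = u \<and> j \<in> V - {u} \<and> j < u")
    case True
    with assms(3)[rule_format, of j] have "P j u \<noteq> Up" unfolding arc_def by auto
    with True show ?thesis unfolding add_source_def by (cases "P j u") auto
  next
    case False
    moreover have "P u k = Up" if "k \<in> V - {u}" "u < k"
      using assms(3)[rule_format, of k] that unfolding arc_def by auto
    ultimately show ?thesis
      using assms(1,2) unfolding add_source_def delete_vertex_def assignments_on_def by auto
  qed
qed

lemma arc_trans_on_delete_vertex:
  "arc_trans_on V P \<Longrightarrow> arc_trans_on (V - {u}) (delete_vertex u P)"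
  unfolding arc_trans_on_def by (simp add: arc_delete_vertex) blast

lemma triangle_cond_delete_vertex:
  "triangle_cond V P \<Longrightarrow> triangle_cond (V - {u}) (delete_vertex u P)"
  unfolding triangle_cond_def by (simp add: arc_delete_vertex etp_delete_vertex) blast

lemma delete_vertex_in_parking_graphs:
  "P \<in> parking_graphs_on V \<Longrightarrow> delete_vertex u P \<in> parking_graphs_on (V - {u})"
  unfolding parking_graphs_on_def
  by (auto intro: delete_vertex_in_assignments arc_trans_on_delete_vertex triangle_cond_delete_vertex)

lemma arc_trans_on_add_source:
  assumes "arc_trans_on V P" "u \<notin> V"
  shows "arc_trans_on (insert u V) (add_source u A V P)"
  unfolding arc_trans_on_def
proof (intro ballI impI)
  fix x y z assume xyz: "x \<in> insert u V" "y \<in> insert u V" "z \<in> insert u V"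
    and a: "arc (add_source u A V P) x y \<and> arc (add_source u A V P) y z"
  have yz: "y \<noteq> u" "z \<noteq> u"
    using a xyz no_arc_to_added_source[of x u V A P] no_arc_to_added_source[of y u V A P] by auto
  show "arc (add_source u A V P) x z"
  proof (cases "x = u")
    case True
    with yz xyz show ?thesis by (simp add: arc_from_added_source)
  next
    case False
    with a yz have "arc P x y" "arc P y z" by (simp_all add: arc_add_source)
    with assms(1) xyz False yz have "arc P x z" unfolding arc_trans_on_def by blast
    with False yz show ?thesis by (simp add: arc_add_source)
  qed
qed

definition down_free :: "nat set \<Rightarrow> (nat \<Rightarrow> nat \<Rightarrow> etype) \<Rightarrow> nat \<Rightarrow> bool" where
  "down_free V P t = (\<forall>y\<in>V. t < y \<longrightarrow> P t y \<noteq> Down)"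

definition admissible :: "nat \<Rightarrow> nat set \<Rightarrow> (nat \<Rightarrow> nat \<Rightarrow> etype) \<Rightarrow> nat set \<Rightarrow> bool" where
  "admissible u V P A = (\<forall>t\<in>A. down_free V P t \<and> (\<forall>m\<in>V. m < u \<and> arc P m t \<longrightarrow> m \<in> A))"

lemma down_free_arc:
  assumes "down_free V P t" "m \<in> V" "arc P m t"
  shows "etp P m t \<noteq> Down"
  using assms arc_irrefl[of P t] unfolding etp_def arc_def down_free_def
  by (cases m t rule: linorder_cases) auto

lemma admissible_if_triangle_cond_add_source:
  assumes T: "triangle_cond (insert u V) (add_source u A V P)"
    and "u \<notin> V" and A: "A \<subseteq> {x\<in>V. x < u}"
  shows "admissible u V P A"
  unfolding admissible_def
proof (rule ballI, rule conjI)
  let ?Q = "add_source u A V P"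
  fix t assume "t \<in> A"
  then have tV: "t \<in> V" "t \<noteq> u" "etp ?Q u t = Downish"
    using A etp_from_added_source[of t V u A P] by auto
  show "down_free V P t" unfolding down_free_def
  proof (intro ballI impI notI)
    fix y assume yV: "y \<in> V" "t < y" and D: "P t y = Down"
    then have "y \<noteq> u" using \<open>u \<notin> V\<close> by blast
    have "arc P y t" "etp P y t = Down" using D yV unfolding arc_def etp_def by auto
    with \<open>y \<noteq> u\<close> tV have "arc ?Q y t" "etp ?Q y t = Down"
      by (simp_all add: arc_add_source etp_add_source)
    with T yV tV arc_from_added_source[OF yV(1) \<open>y \<noteq> u\<close>] show False
      unfolding triangle_cond_def by blast
  qed
  show "\<forall>m\<in>V. m < u \<and> arc P m t \<longrightarrow> m \<in> A"
  proof (intro ballI impI)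
    fix m assume mV: "m \<in> V" and m: "m < u \<and> arc P m t"
    then have "m \<noteq> u" "arc ?Q m t" using tV by (simp_all add: arc_add_source)
    with T mV tV arc_from_added_source[OF mV \<open>m \<noteq> u\<close>] have "etp ?Q u m \<noteq> Down"
      unfolding triangle_cond_def by blast
    with mV m show "m \<in> A" using etp_from_added_source[OF mV] by (auto split: if_splits)
  qed
qed

lemma triangle_cond_add_source_if_admissible:
  assumes T: "triangle_cond V P" and "u \<notin> V" and adm: "admissible u V P A"
  shows "triangle_cond (insert u V) (add_source u A V P)"
  unfolding triangle_cond_def
proof (intro ballI impI)
  let ?Q = "add_source u A V P"
  fix s m t assume sV: "s \<in> insert u V" and mV: "m \<in> insert u V" and tV: "t \<in> insert u V"
    and h: "arc ?Q s m \<and> arc ?Q m t \<and> etp ?Q s t = Downish"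
  have mu: "m \<noteq> u" and tu: "t \<noteq> u"
    using h sV mV no_arc_to_added_source[of s u V A P] no_arc_to_added_source[of m u V A P] by auto
  with mV tV have mt: "m \<in> V" "t \<in> V" "arc P m t" using h by (auto simp: arc_add_source)
  show "etp ?Q s m \<noteq> Down \<and> etp ?Q m t \<noteq> Down"
  proof (cases "s = u")
    case True
    with h have "t \<in> A" "t < u" using etp_from_added_source[OF mt(2) tu] by (auto split: if_splits)
    with adm have "down_free V P t" "\<forall>m\<in>V. m < u \<and> arc P m t \<longrightarrow> m \<in> A"
      unfolding admissible_def by auto
    with True mu tu mt show ?thesis
      using etp_from_added_source[OF mt(1) mu] down_free_arc by (auto simp: etp_add_source)
  next
    case False
    with h sV mu tu have "s \<in> V" "arc P s m" "etp P s t = Downish"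
      by (auto simp: arc_add_source etp_add_source)
    with T mt have "etp P s m \<noteq> Down \<and> etp P m t \<noteq> Down"
      unfolding triangle_cond_def by blast
    with False mu tu show ?thesis by (simp add: etp_add_source)
  qed
qed

lemma triangle_cond_add_source_iff:
  assumes "triangle_cond V P" "u \<notin> V" "A \<subseteq> {x\<in>V. x < u}"
  shows "triangle_cond (insert u V) (add_source u A V P) \<longleftrightarrow> admissible u V P A"
  using assms admissible_if_triangle_cond_add_source triangle_cond_add_source_if_admissible by blast

section \<open>The word of a parking graph\<close>

definition word_length :: "nat set \<Rightarrow> (nat \<Rightarrow> nat \<Rightarrow> etype) \<Rightarrow> nat" where
  "word_length V P = (LEAST i. i < card V \<longrightarrow> \<not> down_free V P (vertex_of_rank V P i))"

definition graph_word :: "nat set \<Rightarrow> (nat \<Rightarrow> nat \<Rightarrow> etype) \<Rightarrow> nat list" where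
  "graph_word V P = map (vertex_of_rank V P) [0..<word_length V P]"

definition lower_part :: "nat \<Rightarrow> nat set \<Rightarrow> (nat \<Rightarrow> nat \<Rightarrow> etype) \<Rightarrow> nat \<Rightarrow> nat set" where
  "lower_part u V P j = {x\<in>V. x < u \<and> rank V P x < j}"

lemma word_length_le: "word_length V P \<le> card V"
  unfolding word_length_def by (rule Least_le) simp

lemma down_free_below_word_length:
  assumes "i < word_length V P"
  shows "i < card V" "down_free V P (vertex_of_rank V P i)"
  using not_less_Least[OF assms[unfolded word_length_def]] by auto

lemma not_down_free_at_word_length:
  assumes "word_length V P < card V"
  shows "\<not> down_free V P (vertex_of_rank V P (word_length V P))"
  using LeastI[of "\<lambda>i. i < card V \<longrightarrow> \<not> down_free V P (vertex_of_rank V P i)" "card V"] assms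
  unfolding word_length_def by simp

lemma length_graph_word: "length (graph_word V P) = word_length V P"
  unfolding graph_word_def by simp

lemma nth_graph_word: "i < word_length V P \<Longrightarrow> graph_word V P ! i = vertex_of_rank V P i"
  unfolding graph_word_def by simp

lemma rank_add_source:
  assumes "finite V" "u \<notin> V" "x \<in> V"
  shows "rank (insert u V) (add_source u A V P) x = Suc (rank V P x)"
proof -
  have "x \<noteq> u" using assms by blast
  then have "arc (add_source u A V P) y x = arc P y x" if "y \<in> V" for y
    using assms(2) that arc_add_source by metis
  then have "{y\<in>insert u V. arc (add_source u A V P) y x} = insert u {y\<in>V. arc P y x}"
    using arc_from_added_source[OF assms(3) \<open>x \<noteq> u\<close>] by auto
  then show ?thesis unfolding rank_def using assms(1,2) by simp
qed

lemma rank_added_source: "rank (insert u V) (add_source u A V P) u = 0"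
proof -
  have "{y\<in>insert u V. arc (add_source u A V P) y u} = {}"
    using no_arc_to_added_source by blast
  then show ?thesis unfolding rank_def by (metis card.empty)
qed

lemma vertex_of_rank_add_source:
  assumes "finite V" "arc_trans_on V P" "u \<notin> V"
  shows "vertex_of_rank (insert u V) (add_source u A V P) 0 = u"
    and "i < card V \<Longrightarrow> vertex_of_rank (insert u V) (add_source u A V P) (Suc i) = vertex_of_rank V P i"
proof -
  have fin: "finite (insert u V)" and trans: "arc_trans_on (insert u V) (add_source u A V P)"
    using assms arc_trans_on_add_source by auto
  show "vertex_of_rank (insert u V) (add_source u A V P) 0 = u"
    using vertex_of_rank_rank[OF fin trans, of u] rank_added_source by simp
  assume "i < card V"
  then have x: "vertex_of_rank V P i \<in> V" "rank V P (vertex_of_rank V P i) = i"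
    using vertex_of_rank_spec[OF assms(1,2)] by auto
  then show "vertex_of_rank (insert u V) (add_source u A V P) (Suc i) = vertex_of_rank V P i"
    using vertex_of_rank_rank[OF fin trans] rank_add_source[OF assms(1,3) x(1)] by fastforce
qed

lemma down_free_add_source:
  assumes "x \<in> V" "u \<notin> V"
  shows "down_free (insert u V) (add_source u A V P) x \<longleftrightarrow> down_free V P x \<and> (x < u \<longrightarrow> x \<in> A)"
  using assms unfolding down_free_def add_source_def by auto

lemma down_free_added_source: "u \<notin> V \<Longrightarrow> down_free (insert u V) (add_source u A V P) u"
  unfolding down_free_def add_source_def by auto

lemma down_free_add_source_lower_part:
  assumes "finite V" "arc_trans_on V P" "u \<notin> V" "i < card V"
  shows "down_free (insert u V) (add_source u (lower_part u V P j) V P)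
           (vertex_of_rank (insert u V) (add_source u (lower_part u V P j) V P) (Suc i))
         \<longleftrightarrow> down_free V P (vertex_of_rank V P i) \<and> (vertex_of_rank V P i < u \<longrightarrow> i < j)"
  using vertex_of_rank_spec[OF assms(1,2,4)] vertex_of_rank_add_source(2)[OF assms(1-4)]
    down_free_add_source[OF _ assms(3)]
  unfolding lower_part_def by auto

lemma word_length_add_source:
  assumes "finite V" "arc_trans_on V P" "u \<notin> V" "j \<le> word_length V P"
    and "j = word_length V P \<or> vertex_of_rank V P j < u"
  shows "word_length (insert u V) (add_source u (lower_part u V P j) V P) = Suc j"
  unfolding word_length_def
proof (rule Least_equality)
  let ?Q = "add_source u (lower_part u V P j) V P"
  have card: "card (insert u V) = Suc (card V)" using assms(1,3) by simp
  show "Suc j < card (insert u V) \<longrightarrow> \<not> down_free (insert u V) ?Q (vertex_of_rank (insert u V) ?Q (Suc j))"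
  proof
    assume "Suc j < card (insert u V)"
    then have "j < card V" by (simp add: card)
    with assms(5) show "\<not> down_free (insert u V) ?Q (vertex_of_rank (insert u V) ?Q (Suc j))"
      using down_free_add_source_lower_part[OF assms(1-3)] not_down_free_at_word_length[of V P]
      by auto
  qed
  fix i assume bad: "i < card (insert u V) \<longrightarrow> \<not> down_free (insert u V) ?Q (vertex_of_rank (insert u V) ?Q i)"
  show "Suc j \<le> i"
  proof (cases i)
    case 0
    with bad show ?thesis
      using vertex_of_rank_add_source(1)[OF assms(1-3)] down_free_added_source[OF assms(3)] card
      by simp
  next
    case (Suc k)
    show ?thesis
    proof (rule ccontr)
      assume "\<not> Suc j \<le> i"
      with Suc assms(4) have "k < word_length V P" "k < j" by auto
      then have "k < card V" "down_free V P (vertex_of_rank V P k)"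
        using down_free_below_word_length by auto
      with bad Suc \<open>k < j\<close> show False
        using down_free_add_source_lower_part[OF assms(1-3)] card by simp
    qed
  qed
qed

lemma graph_word_add_source:
  assumes "finite V" "arc_trans_on V P" "u \<notin> V" "j \<le> word_length V P"
    and "j = word_length V P \<or> vertex_of_rank V P j < u"
  shows "graph_word (insert u V) (add_source u (lower_part u V P j) V P) = u # take j (graph_word V P)"
proof -
  let ?Q = "add_source u (lower_part u V P j) V P"
  have "graph_word (insert u V) ?Q = map (vertex_of_rank (insert u V) ?Q) [0..<Suc j]"
    unfolding graph_word_def word_length_add_source[OF assms] ..
  also have "\<dots> = vertex_of_rank (insert u V) ?Q 0 # map (vertex_of_rank (insert u V) ?Q) (map Suc [0..<j])"
    by (simp add: upt_conv_Cons map_Suc_upt del: upt_Suc)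
  also have "\<dots> = u # map (vertex_of_rank V P) [0..<j]"
    using vertex_of_rank_add_source[OF assms(1-3)] assms(4) word_length_le[of V P] by simp
  also have "\<dots> = u # take j (graph_word V P)"
    unfolding graph_word_def using assms(4) by (simp add: take_map min_def)
  finally show ?thesis .
qed

lemma admissible_lower_part:
  assumes "finite V" "arc_trans_on V P" "j \<le> word_length V P"
  shows "admissible u V P (lower_part u V P j)"
  unfolding admissible_def
proof (rule ballI, rule conjI)
  fix t assume "t \<in> lower_part u V P j"
  then have t: "t \<in> V" "rank V P t < j" unfolding lower_part_def by auto
  then show "down_free V P t"
    using assms(3) down_free_below_word_length(2)[of "rank V P t" V P] vertex_of_rank_rank[OF assms(1,2)]
    by simp
  show "\<forall>m\<in>V. m < u \<and> arc P m t \<longrightarrow> m \<in> lower_part u V P j"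
    using t rank_less[OF assms(1,2) _ t(1)] unfolding lower_part_def by fastforce
qed

lemma admissible_rank_less_word_length:
  assumes fin: "finite V" and trans: "arc_trans_on V P" and tri: "triangle_cond V P"
    and A: "A \<subseteq> {x\<in>V. x < u}" "admissible u V P A" and "t \<in> A"
  shows "rank V P t < word_length V P"
proof (rule ccontr)
  let ?y = "vertex_of_rank V P (word_length V P)"
  have tV: "t \<in> V" "t < u" "down_free V P t" using A \<open>t \<in> A\<close> unfolding admissible_def by auto
  assume "\<not> rank V P t < word_length V P"
  then have le: "word_length V P \<le> rank V P t" by simp
  then have "word_length V P < card V" using rank_lt_card[OF fin tV(1)] by (simp add: le_less_trans)
  then have y: "?y \<in> V" "rank V P ?y = word_length V P" "\<not> down_free V P ?y"
    using vertex_of_rank_spec[OF fin trans] not_down_free_at_word_length by auto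
  then obtain z where z: "z \<in> V" "?y < z" "P ?y z = Down" unfolding down_free_def by blast
  have "?y \<noteq> t" using y(3) tV(3) by blast
  then have ayt: "arc P ?y t"
    using le y(1,2) tV(1) arc_iff_rank_less[OF fin trans] rank_eq_iff[OF fin trans] by fastforce
  have azy: "arc P z ?y" "etp P z ?y = Down" using z(2,3) unfolding arc_def etp_def by auto
  with trans z(1) y(1) tV(1) ayt have azt: "arc P z t" unfolding arc_trans_on_def by blast
  show False
  proof (cases "t < z")
    case True
    with azt tV(3) z(1) have "etp P z t = Downish"
      unfolding arc_def etp_def down_free_def by (cases "P t z") auto
    with tri z(1) y(1) tV(1) azy ayt show False unfolding triangle_cond_def by blast
  next
    case False
    with z(2) tV(2) have "?y < u" by simp
    with A y(1) ayt \<open>t \<in> A\<close> have "?y \<in> A" unfolding admissible_def by blast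
    with A y(3) show False unfolding admissible_def by blast
  qed
qed

lemma admissible_eq_lower_part:
  assumes fin: "finite V" and trans: "arc_trans_on V P" and tri: "triangle_cond V P"
    and A: "A \<subseteq> {x\<in>V. x < u}" "admissible u V P A"
  obtains j where "j \<le> word_length V P" "j = word_length V P \<or> vertex_of_rank V P j < u"
    "A = lower_part u V P j"
proof
  let ?c = "word_length V P"
  let ?L = "lower_part u V P ?c"
  define j where "j = (LEAST i. i = ?c \<or> (\<exists>x\<in>?L - A. rank V P x = i))"
  have "j = ?c \<or> (\<exists>x\<in>?L - A. rank V P x = j)"
    unfolding j_def by (rule LeastI[of _ ?c]) simp
  then obtain x where x: "j = ?c \<or> x \<in> V \<and> x < u \<and> x \<notin> A \<and> rank V P x = j \<and> j < ?c"
    unfolding lower_part_def by auto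
  have min: "j \<le> rank V P y" if "y \<in> ?L - A" for y
    unfolding j_def by (rule Least_le) (use that in blast)
  show "j \<le> ?c" unfolding j_def by (rule Least_le) simp
  show "j = ?c \<or> vertex_of_rank V P j < u"
    using x vertex_of_rank_rank[OF fin trans, of x] by auto
  show "A = lower_part u V P j"
  proof
    show "A \<subseteq> lower_part u V P j"
    proof
      fix t assume "t \<in> A"
      then have t: "t \<in> V" "t < u" "rank V P t < ?c"
        using A admissible_rank_less_word_length[OF fin trans tri A] by auto
      have "rank V P t < j"
      proof (rule ccontr)
        assume "\<not> rank V P t < j"
        with x t have x': "x \<in> V" "x < u" "x \<notin> A" "rank V P x \<le> rank V P t" by auto
        with \<open>t \<in> A\<close> have "rank V P x \<noteq> rank V P t" using rank_eq_iff[OF fin trans x'(1) t(1)] by blast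
        with x' t have "arc P x t" using arc_iff_rank_less[OF fin trans x'(1) t(1)] by simp
        with A(2) \<open>t \<in> A\<close> x' show False unfolding admissible_def by blast
      qed
      with t show "t \<in> lower_part u V P j" unfolding lower_part_def by simp
    qed
    show "lower_part u V P j \<subseteq> A"
    proof
      fix t assume "t \<in> lower_part u V P j"
      with \<open>j \<le> ?c\<close> have "t \<in> ?L" "rank V P t < j" unfolding lower_part_def by auto
      with min show "t \<in> A" by force
    qed
  qed
qed

definition extends_below :: "nat \<Rightarrow> nat list \<Rightarrow> nat list set" where
  "extends_below u \<tau> = {\<sigma>. take (length \<tau>) \<sigma> = \<tau> \<and> length \<tau> \<le> length \<sigma> \<and>
     (length \<tau> = length \<sigma> \<or> \<sigma> ! length \<tau> < u)}"

lemma lower_part_subset: "lower_part u V P j \<subseteq> {x\<in>V. x < u}"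
  unfolding lower_part_def by auto

lemma graph_word_ConsD:
  assumes fin: "finite V" and P: "P \<in> parking_graphs_on V" and word: "graph_word V P = u # \<tau>"
  shows "u \<in> V" "graph_word (V - {u}) (delete_vertex u P) \<in> extends_below u \<tau>"
    "add_source u (lower_part u (V - {u}) (delete_vertex u P) (length \<tau>)) (V - {u}) (delete_vertex u P) = P"
proof -
  define V' P' where "V' = V - {u}" and "P' = delete_vertex u P"
  have trans: "arc_trans_on V P" and tri: "triangle_cond V P" and ass: "P \<in> assignments_on V"
    using P unfolding parking_graphs_on_def by auto
  have "0 < word_length V P" using word length_graph_word[of V P] by auto
  then have "0 < card V" "vertex_of_rank V P 0 = u"
    using word nth_graph_word[of 0 V P] word_length_le[of V P] by auto
  then have u: "u \<in> V" and "rank V P u = 0" using vertex_of_rank_spec[OF fin trans] by force+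
  then show "u \<in> V" by simp
  from u \<open>rank V P u = 0\<close> have source: "\<forall>y\<in>V - {u}. arc P u y"
    using arc_iff_rank_less[OF fin trans] rank_eq_iff[OF fin trans] by fastforce
  have V': "insert u V' = V" "u \<notin> V'" "finite V'" using u fin unfolding V'_def by auto
  have P': "arc_trans_on V' P'" "triangle_cond V' P'"
    using delete_vertex_in_parking_graphs[OF P] unfolding parking_graphs_on_def V'_def P'_def by auto
  define A where "A = {j\<in>V'. j < u \<and> P j u = Downish}"
  have A: "A \<subseteq> {x\<in>V'. x < u}" unfolding A_def by auto
  have P_eq: "add_source u A V' P' = P"
    unfolding A_def P'_def V'_def using add_source_delete_vertex[OF ass u source] .
  then have "admissible u V' P' A"
    using triangle_cond_add_source_iff[OF P'(2) V'(2) A] V'(1) tri by simp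
  then obtain j where j: "j \<le> word_length V' P'" "j = word_length V' P' \<or> vertex_of_rank V' P' j < u"
    "A = lower_part u V' P' j"
    using admissible_eq_lower_part[OF V'(3) P' A] by blast
  have "u # \<tau> = u # take j (graph_word V' P')"
    using graph_word_add_source[OF V'(3) P'(1) V'(2) j(1,2)] P_eq j(3) V'(1) word by simp
  then have \<tau>: "\<tau> = take j (graph_word V' P')" "length \<tau> = j"
    using j(1) length_graph_word[of V' P'] by auto
  moreover have "j = length (graph_word V' P') \<or> graph_word V' P' ! j < u"
    using j(1,2) nth_graph_word[of j V' P'] length_graph_word[of V' P'] by (cases "j = word_length V' P'") auto
  ultimately show "graph_word (V - {u}) (delete_vertex u P) \<in> extends_below u \<tau>"
    using j(1) length_graph_word[of V' P'] unfolding extends_below_def V'_def P'_def by simp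
  show "add_source u (lower_part u (V - {u}) (delete_vertex u P) (length \<tau>)) (V - {u}) (delete_vertex u P) = P"
    using P_eq j(3) \<tau>(2) unfolding V'_def P'_def by simp
qed

lemma graph_word_add_source_lower_part:
  assumes fin: "finite V" and "u \<notin> V" and P: "P \<in> parking_graphs_on V"
    and word: "graph_word V P \<in> extends_below u \<tau>"
  shows "add_source u (lower_part u V P (length \<tau>)) V P \<in> parking_graphs_on (insert u V)"
    "graph_word (insert u V) (add_source u (lower_part u V P (length \<tau>)) V P) = u # \<tau>"
proof -
  let ?j = "length \<tau>"
  have ass: "P \<in> assignments_on V" and trans: "arc_trans_on V P" and tri: "triangle_cond V P"
    using P unfolding parking_graphs_on_def by auto
  have w: "take ?j (graph_word V P) = \<tau>" "?j \<le> word_length V P"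
    "?j = word_length V P \<or> graph_word V P ! ?j < u"
    using word unfolding extends_below_def by (simp_all add: length_graph_word)
  then have j: "?j = word_length V P \<or> vertex_of_rank V P ?j < u"
    using nth_graph_word[of ?j V P] by (cases "?j = word_length V P") auto
  have "admissible u V P (lower_part u V P ?j)" using admissible_lower_part[OF fin trans w(2)] .
  then have "triangle_cond (insert u V) (add_source u (lower_part u V P ?j) V P)"
    using triangle_cond_add_source_iff[OF tri \<open>u \<notin> V\<close> lower_part_subset] by simp
  then show "add_source u (lower_part u V P ?j) V P \<in> parking_graphs_on (insert u V)"
    unfolding parking_graphs_on_def
    using add_source_in_assignments[OF ass \<open>u \<notin> V\<close>] arc_trans_on_add_source[OF trans \<open>u \<notin> V\<close>] by simp
  show "graph_word (insert u V) (add_source u (lower_part u V P ?j) V P) = u # \<tau>"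
    using graph_word_add_source[OF fin trans \<open>u \<notin> V\<close> w(2) j] w(1) by simp
qed

lemma card_graph_word_Cons:
  assumes "finite V" "u \<in> V"
  shows "card {P \<in> parking_graphs_on V. graph_word V P = u # \<tau>}
       = card {P \<in> parking_graphs_on (V - {u}). graph_word (V - {u}) P \<in> extends_below u \<tau>}"
proof -
  define V' where "V' = V - {u}"
  have V': "insert u V' = V" "u \<notin> V'" "finite V'" using assms unfolding V'_def by auto
  have "bij_betw (delete_vertex u) {P \<in> parking_graphs_on V. graph_word V P = u # \<tau>}
      {P \<in> parking_graphs_on V'. graph_word V' P \<in> extends_below u \<tau>}"
  proof (rule bij_betw_byWitness[where f'="\<lambda>P. add_source u (lower_part u V' P (length \<tau>)) V' P"])
    show "\<forall>P\<in>{P \<in> parking_graphs_on V. graph_word V P = u # \<tau>}.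
        add_source u (lower_part u V' (delete_vertex u P) (length \<tau>)) V' (delete_vertex u P) = P"
      using graph_word_ConsD(3)[OF assms(1)] unfolding V'_def by blast
    show "\<forall>P\<in>{P \<in> parking_graphs_on V'. graph_word V' P \<in> extends_below u \<tau>}.
        delete_vertex u (add_source u (lower_part u V' P (length \<tau>)) V' P) = P"
      using delete_add_source V'(2) unfolding parking_graphs_on_def by blast
    show "delete_vertex u ` {P \<in> parking_graphs_on V. graph_word V P = u # \<tau>}
        \<subseteq> {P \<in> parking_graphs_on V'. graph_word V' P \<in> extends_below u \<tau>}"
      using graph_word_ConsD(2)[OF assms(1)] delete_vertex_in_parking_graphs unfolding V'_def by blast
    show "(\<lambda>P. add_source u (lower_part u V' P (length \<tau>)) V' P) `
        {P \<in> parking_graphs_on V'. graph_word V' P \<in> extends_below u \<tau>}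
        \<subseteq> {P \<in> parking_graphs_on V. graph_word V P = u # \<tau>}"
      using graph_word_add_source_lower_part[OF V'(3,2)] V'(1) by blast
  qed
  then show ?thesis unfolding V'_def by (rule bij_betw_same_card)
qed

section \<open>Parking functions and their word\<close>

text \<open>Preferences are 0-based: car \<open>x\<close> prefers spot \<open>b x\<close> among the spots
  \<open>0, \<dots>, card V - 1\<close>.\<close>

definition parking_functions_on :: "nat set \<Rightarrow> (nat \<Rightarrow> nat) set" where
  "parking_functions_on V =
     {b. (\<forall>x. x \<notin> V \<longrightarrow> b x = 0) \<and> (\<forall>k \<le> card V. k \<le> card {x\<in>V. b x < k})}"

definition block :: "nat set \<Rightarrow> (nat \<Rightarrow> nat) \<Rightarrow> nat \<Rightarrow> nat set" where
  "block V b j = {x\<in>V. b x = j}"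

definition num_blocks :: "nat set \<Rightarrow> (nat \<Rightarrow> nat) \<Rightarrow> nat" where
  "num_blocks V b = (LEAST j. block V b j = {})"

definition pf_word :: "nat set \<Rightarrow> (nat \<Rightarrow> nat) \<Rightarrow> nat list" where
  "pf_word V b = map (\<lambda>j. Max (block V b j)) [0..<num_blocks V b]"

lemma parking_functions_onD:
  assumes "b \<in> parking_functions_on V"
  shows "x \<notin> V \<Longrightarrow> b x = 0" "k \<le> card V \<Longrightarrow> k \<le> card {x\<in>V. b x < k}"
  using assms unfolding parking_functions_on_def by auto

lemma parking_function_less_card:
  assumes "finite V" "b \<in> parking_functions_on V" "x \<in> V"
  shows "b x < card V"
proof -
  have "card V \<le> card {x\<in>V. b x < card V}" using parking_functions_onD(2)[OF assms(2)] by simp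
  then have "{x\<in>V. b x < card V} = V" using assms(1) by (intro card_seteq) auto
  then show ?thesis using assms(3) by blast
qed

lemma block_num_blocks:
  assumes "finite V" "b \<in> parking_functions_on V"
  shows "block V b (num_blocks V b) = {}"
proof -
  have "block V b (card V) = {}"
    using parking_function_less_card[OF assms] unfolding block_def by fastforce
  then show ?thesis unfolding num_blocks_def by (rule LeastI)
qed

lemma block_nonempty: "j < num_blocks V b \<Longrightarrow> block V b j \<noteq> {}"
  unfolding num_blocks_def by (rule not_less_Least)

lemma num_blocks_eqI:
  "block V b j = {} \<Longrightarrow> (\<And>i. i < j \<Longrightarrow> block V b i \<noteq> {}) \<Longrightarrow> num_blocks V b = j"
  unfolding num_blocks_def by (rule Least_equality) (auto simp: not_less[symmetric])

lemma length_pf_word: "length (pf_word V b) = num_blocks V b"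
  unfolding pf_word_def by simp

lemma nth_pf_word: "j < num_blocks V b \<Longrightarrow> pf_word V b ! j = Max (block V b j)"
  unfolding pf_word_def by simp

lemma card_less_if_blocks_nonempty:
  assumes "finite V" "\<And>i. i < k \<Longrightarrow> block V b i \<noteq> {}"
  shows "k \<le> card {x\<in>V. b x < k}"
proof -
  have "{x\<in>V. b x < k} = (\<Union>i<k. block V b i)" unfolding block_def by auto
  moreover have "card (\<Union>i<k. block V b i) = (\<Sum>i<k. card (block V b i))"
    using assms(1) by (intro card_UN_disjoint) (auto simp: block_def)
  moreover have "(\<Sum>i<k. card (block V b i)) \<ge> (\<Sum>i<k. 1)"
    using assms by (intro sum_mono) (auto simp: block_def Suc_le_eq card_gt_0_iff)
  ultimately show ?thesis by simp
qed

text \<open>On \<open>V - {u}\<close>, \<open>pf_delete\<close> shifts the preferences cyclically down by one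
  modulo \<open>num_blocks V b\<close>.\<close>

definition pf_delete :: "nat \<Rightarrow> nat set \<Rightarrow> (nat \<Rightarrow> nat) \<Rightarrow> nat \<Rightarrow> nat" where
  "pf_delete u V b =
     (\<lambda>x. if x \<in> V \<and> x \<noteq> u then (if b x = 0 then num_blocks V b - 1 else b x - 1) else 0)"

definition pf_insert :: "nat \<Rightarrow> nat \<Rightarrow> nat set \<Rightarrow> (nat \<Rightarrow> nat) \<Rightarrow> nat \<Rightarrow> nat" where
  "pf_insert u j V b = (\<lambda>x. if x \<in> V - {u} then (if b x = j then 0 else Suc (b x)) else 0)"

lemma block_pf_insert:
  assumes "u \<notin> V"
  shows "block (insert u V) (pf_insert u j V b) 0 = insert u (block V b j)"
    "block (insert u V) (pf_insert u j V b) (Suc i) = (if i = j then {} else block V b i)"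
  using assms unfolding block_def pf_insert_def by auto

lemma pf_insert_in_parking_functions:
  assumes "finite V" "u \<notin> V" "b \<in> parking_functions_on V"
  shows "pf_insert u j V b \<in> parking_functions_on (insert u V)"
  unfolding parking_functions_on_def
proof (intro CollectI conjI allI impI)
  fix x assume "x \<notin> insert u V"
  then show "pf_insert u j V b x = 0" unfolding pf_insert_def by simp
next
  fix k assume k: "k \<le> card (insert u V)"
  show "k \<le> card {x\<in>insert u V. pf_insert u j V b x < k}"
  proof (cases k)
    case (Suc k')
    have "insert u {x\<in>V. b x < k'} \<subseteq> {x\<in>insert u V. pf_insert u j V b x < k}"
      using Suc assms(2) unfolding pf_insert_def by auto
    then have "card (insert u {x\<in>V. b x < k'}) \<le> card {x\<in>insert u V. pf_insert u j V b x < k}"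
      using assms(1) by (intro card_mono) auto
    moreover have "k' \<le> card {x\<in>V. b x < k'}"
      using parking_functions_onD(2)[OF assms(3)] k Suc assms(1,2) by simp
    ultimately show ?thesis using Suc assms(1,2) by simp
  qed simp
qed

lemma pf_word_pf_insert:
  assumes "finite V" "u \<notin> V" "b \<in> parking_functions_on V" "pf_word V b \<in> extends_below u \<tau>"
  shows "pf_word (insert u V) (pf_insert u (length \<tau>) V b) = u # \<tau>"
proof -
  let ?j = "length \<tau>" and ?V = "insert u V" and ?b = "pf_insert u (length \<tau>) V b"
  have w: "take ?j (pf_word V b) = \<tau>" "?j \<le> num_blocks V b"
    "?j = num_blocks V b \<or> pf_word V b ! ?j < u"
    using assms(4) unfolding extends_below_def by (simp_all add: length_pf_word)
  have num: "num_blocks ?V ?b = Suc ?j"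
    using block_pf_insert[OF assms(2)] block_nonempty[of _ V b] w(2)
    by (intro num_blocks_eqI) (auto simp: less_Suc_eq_0_disj)
  have "Max (block ?V ?b 0) = u"
  proof (cases "?j = num_blocks V b")
    case True
    then show ?thesis using block_pf_insert(1)[OF assms(2)] block_num_blocks[OF assms(1,3)] by simp
  next
    case False
    with w have "block V b ?j \<noteq> {}" "Max (block V b ?j) < u"
      using block_nonempty nth_pf_word by auto
    moreover have "finite (block V b ?j)" using assms(1) unfolding block_def by simp
    ultimately show ?thesis using block_pf_insert(1)[OF assms(2)] by simp
  qed
  then have "pf_word ?V ?b = u # map (\<lambda>i. Max (block ?V ?b (Suc i))) [0..<?j]"
    unfolding pf_word_def num by (simp add: upt_conv_Cons map_Suc_upt[symmetric] del: upt_Suc)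
  also have "\<dots> = u # map (\<lambda>i. Max (block V b i)) [0..<?j]"
    using block_pf_insert(2)[OF assms(2)] by simp
  also have "\<dots> = u # \<tau>"
    using w(1,2) unfolding pf_word_def by (simp add: take_map min_def)
  finally show ?thesis .
qed

lemma pf_delete_pf_insert:
  assumes "finite V" "u \<notin> V" "b \<in> parking_functions_on V" "j \<le> num_blocks V b"
  shows "pf_delete u (insert u V) (pf_insert u j V b) = b"
proof -
  have "num_blocks (insert u V) (pf_insert u j V b) = Suc j"
    using block_pf_insert[OF assms(2)] block_nonempty[of _ V b] assms(4)
    by (intro num_blocks_eqI) (auto simp: less_Suc_eq_0_disj)
  then show ?thesis
    using assms(2) parking_functions_onD(1)[OF assms(3)]
    unfolding pf_delete_def pf_insert_def by (auto intro!: ext)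
qed

lemma pf_word_ConsD:
  assumes "finite V" "b \<in> parking_functions_on V" "pf_word V b = u # \<tau>"
  shows "num_blocks V b = Suc (length \<tau>)" "u \<in> V" "b u = 0" "\<And>x. x \<in> block V b 0 \<Longrightarrow> x \<le> u"
proof -
  show num: "num_blocks V b = Suc (length \<tau>)" using assms(3) length_pf_word[of V b] by simp
  have "block V b 0 \<noteq> {}" "finite (block V b 0)" "Max (block V b 0) = u"
    using block_nonempty[of 0 V b] assms(1,3) nth_pf_word[of 0 V b] num unfolding block_def by auto
  then have "u \<in> block V b 0" "\<And>x. x \<in> block V b 0 \<Longrightarrow> x \<le> u" using Max_in Max_ge by blast+
  then show "u \<in> V" "b u = 0" "\<And>x. x \<in> block V b 0 \<Longrightarrow> x \<le> u" unfolding block_def by auto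
qed

lemma block_pf_delete:
  assumes "finite V" "b \<in> parking_functions_on V" "num_blocks V b = Suc j" "b u = 0"
  shows "block (V - {u}) (pf_delete u V b) j = block V b 0 - {u}"
    "i \<noteq> j \<Longrightarrow> block (V - {u}) (pf_delete u V b) i = block V b (Suc i)"
proof -
  have "b x \<noteq> Suc j" if "x \<in> V" for x
    using block_num_blocks[OF assms(1,2)] assms(3) that unfolding block_def by auto
  then have delete_eq: "pf_delete u V b x = i \<longleftrightarrow> (if i = j then b x = 0 else b x = Suc i)"
    if "x \<in> V - {u}" for x i
    using that assms(3) unfolding pf_delete_def by (cases "b x") auto
  show "block (V - {u}) (pf_delete u V b) j = block V b 0 - {u}"
  proof (rule set_eqI)
    fix x show "x \<in> block (V - {u}) (pf_delete u V b) j \<longleftrightarrow> x \<in> block V b 0 - {u}"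
      using delete_eq[of x j] unfolding block_def by auto
  qed
  show "block (V - {u}) (pf_delete u V b) i = block V b (Suc i)" if "i \<noteq> j"
  proof (rule set_eqI)
    fix x show "x \<in> block (V - {u}) (pf_delete u V b) i \<longleftrightarrow> x \<in> block V b (Suc i)"
      using delete_eq[of x i] assms(4) that unfolding block_def by (cases "x = u") auto
  qed
qed

lemma pf_delete_in_parking_functions:
  assumes fin: "finite V" and b: "b \<in> parking_functions_on V"
    and num: "num_blocks V b = Suc j" and u: "u \<in> V" "b u = 0"
  shows "pf_delete u V b \<in> parking_functions_on (V - {u})"
  unfolding parking_functions_on_def
proof (intro CollectI conjI allI impI)
  let ?b = "pf_delete u V b"
  fix x assume "x \<notin> V - {u}"
  then show "?b x = 0" unfolding pf_delete_def by auto
next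
  let ?b = "pf_delete u V b"
  fix k assume k: "k \<le> card (V - {u})"
  show "k \<le> card {x\<in>V - {u}. ?b x < k}"
  proof (cases "j < k")
    case True
    then have "{x\<in>V - {u}. ?b x < k} = {x\<in>V. b x < Suc k} - {u}"
      using num unfolding pf_delete_def by auto
    moreover have "card V > 0" using fin u(1) card_gt_0_iff by blast
    with k u(1) have "Suc k \<le> card V" by simp
    then have "Suc k \<le> card {x\<in>V. b x < Suc k}" by (rule parking_functions_onD(2)[OF b])
    ultimately show ?thesis using u by (simp add: card_Diff_singleton)
  next
    case False
    then have "block (V - {u}) ?b i \<noteq> {}" if "i < k" for i
      using that block_pf_delete(2)[OF fin b num u(2), of i] block_nonempty[of "Suc i" V b] num by simp
    then show ?thesis using card_less_if_blocks_nonempty fin by blast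
  qed
qed

lemma pf_word_pf_delete:
  assumes fin: "finite V" and b: "b \<in> parking_functions_on V" and word: "pf_word V b = u # \<tau>"
  shows "pf_word (V - {u}) (pf_delete u V b) \<in> extends_below u \<tau>"
proof -
  let ?j = "length \<tau>" and ?V = "V - {u}" and ?b = "pf_delete u V b"
  note u = pf_word_ConsD[OF fin b word]
  note blocks = block_pf_delete[OF fin b u(1,3)]
  have b': "?b \<in> parking_functions_on ?V" using pf_delete_in_parking_functions[OF fin b u(1-3)] .
  have nonempty: "block ?V ?b i \<noteq> {}" if "i < ?j" for i
    using that blocks(2) block_nonempty[of "Suc i" V b] u(1) by simp
  then have "\<not> num_blocks ?V ?b < ?j" using block_num_blocks[of ?V ?b] fin b' by auto
  then have le: "?j \<le> num_blocks ?V ?b" by simp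
  have "\<tau> = map (\<lambda>i. Max (block V b (Suc i))) [0..<?j]"
    using word unfolding pf_word_def u(1) by (simp add: upt_conv_Cons map_Suc_upt[symmetric] comp_def del: upt_Suc)
  also have "\<dots> = take ?j (pf_word ?V ?b)"
    using le blocks(2) unfolding pf_word_def by (simp add: take_map min_def)
  finally have take: "take ?j (pf_word ?V ?b) = \<tau>" ..
  have "?j = num_blocks ?V ?b \<or> pf_word ?V ?b ! ?j < u"
  proof (cases "?j = num_blocks ?V ?b")
    case False
    with le have "?j < num_blocks ?V ?b" by simp
    then have "block V b 0 - {u} \<noteq> {}" using blocks(1) block_nonempty by metis
    moreover have "finite (block V b 0 - {u})" using fin unfolding block_def by simp
    ultimately have "Max (block V b 0 - {u}) < u" using u(4) by (metis DiffE Max_in insertI1 le_neq_implies_less)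
    then show ?thesis using nth_pf_word[OF \<open>?j < num_blocks ?V ?b\<close>] blocks(1) by simp
  qed simp
  with take le show ?thesis unfolding extends_below_def by (simp add: length_pf_word)
qed

lemma pf_insert_pf_delete:
  assumes fin: "finite V" and b: "b \<in> parking_functions_on V" and word: "pf_word V b = u # \<tau>"
  shows "pf_insert u (length \<tau>) (V - {u}) (pf_delete u V b) = b"
proof
  note u = pf_word_ConsD[OF fin b word]
  fix x
  show "pf_insert u (length \<tau>) (V - {u}) (pf_delete u V b) x = b x"
  proof (cases "x \<in> V - {u}")
    case True
    have "b x \<noteq> Suc (length \<tau>)"
      using block_num_blocks[OF fin b] u(1) True unfolding block_def by auto
    with True u(1) show ?thesis unfolding pf_insert_def pf_delete_def by (cases "b x") auto
  next
    case False
    with u(3) parking_functions_onD(1)[OF b] show ?thesis unfolding pf_insert_def by auto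
  qed
qed

lemma card_pf_word_Cons:
  assumes "finite V" "u \<in> V"
  shows "card {b \<in> parking_functions_on V. pf_word V b = u # \<tau>}
       = card {b \<in> parking_functions_on (V - {u}). pf_word (V - {u}) b \<in> extends_below u \<tau>}"
proof -
  define V' where "V' = V - {u}"
  have V': "insert u V' = V" "u \<notin> V'" "finite V'" using assms unfolding V'_def by auto
  have "bij_betw (pf_delete u V) {b \<in> parking_functions_on V. pf_word V b = u # \<tau>}
      {b \<in> parking_functions_on V'. pf_word V' b \<in> extends_below u \<tau>}"
  proof (rule bij_betw_byWitness[where f'="pf_insert u (length \<tau>) V'"])
    show "\<forall>b\<in>{b \<in> parking_functions_on V. pf_word V b = u # \<tau>}.
        pf_insert u (length \<tau>) V' (pf_delete u V b) = b"
      using pf_insert_pf_delete[OF assms(1)] unfolding V'_def by blast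
    show "\<forall>b\<in>{b \<in> parking_functions_on V'. pf_word V' b \<in> extends_below u \<tau>}.
        pf_delete u V (pf_insert u (length \<tau>) V' b) = b"
    proof
      fix b assume "b \<in> {b \<in> parking_functions_on V'. pf_word V' b \<in> extends_below u \<tau>}"
      then have "b \<in> parking_functions_on V'" "length \<tau> \<le> num_blocks V' b"
        unfolding extends_below_def by (simp_all add: length_pf_word)
      then show "pf_delete u V (pf_insert u (length \<tau>) V' b) = b"
        using pf_delete_pf_insert[OF V'(3,2)] V'(1) by simp
    qed
    show "pf_delete u V ` {b \<in> parking_functions_on V. pf_word V b = u # \<tau>}
        \<subseteq> {b \<in> parking_functions_on V'. pf_word V' b \<in> extends_below u \<tau>}"
    proof (rule image_subsetI)
      fix b assume "b \<in> {b \<in> parking_functions_on V. pf_word V b = u # \<tau>}"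
      then have b: "b \<in> parking_functions_on V" "pf_word V b = u # \<tau>" by simp_all
      note u = pf_word_ConsD[OF assms(1) b]
      show "pf_delete u V b \<in> {b \<in> parking_functions_on V'. pf_word V' b \<in> extends_below u \<tau>}"
        using pf_delete_in_parking_functions[OF assms(1) b(1) u(1-3)] pf_word_pf_delete[OF assms(1) b]
        unfolding V'_def by simp
    qed
    show "pf_insert u (length \<tau>) V' ` {b \<in> parking_functions_on V'. pf_word V' b \<in> extends_below u \<tau>}
        \<subseteq> {b \<in> parking_functions_on V. pf_word V b = u # \<tau>}"
      using pf_insert_in_parking_functions[OF V'(3,2)] pf_word_pf_insert[OF V'(3,2)] V'(1) by blast
  qed
  then show ?thesis unfolding V'_def by (rule bij_betw_same_card)
qed

section \<open>Equally many parking graphs and parking functions\<close>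

lemma finite_parking_graphs_on:
  assumes "finite V"
  shows "finite (parking_graphs_on V)"
proof -
  define B where "B = {g. \<forall>k. (k \<in> V \<longrightarrow> g k \<in> (UNIV :: etype set)) \<and> (k \<notin> V \<longrightarrow> g k = Down)}"
  have "(UNIV :: etype set) = {Down, Up, Downish}"
  proof (rule set_eqI)
    fix e :: etype show "e \<in> UNIV \<longleftrightarrow> e \<in> {Down, Up, Downish}" by (cases e) auto
  qed
  then have "finite (UNIV :: etype set)" by (metis finite.emptyI finite.insertI)
  then have "finite B" unfolding B_def by (rule finite_set_of_finite_funs[OF assms])
  then have "finite {P. \<forall>j. (j \<in> V \<longrightarrow> P j \<in> B) \<and> (j \<notin> V \<longrightarrow> P j = (\<lambda>_. Down))}"
    by (rule finite_set_of_finite_funs[OF assms])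
  moreover have "parking_graphs_on V \<subseteq> {P. \<forall>j. (j \<in> V \<longrightarrow> P j \<in> B) \<and> (j \<notin> V \<longrightarrow> P j = (\<lambda>_. Down))}"
  proof
    fix P assume "P \<in> parking_graphs_on V"
    then have "P j k = Down" if "\<not> (j \<in> V \<and> k \<in> V \<and> j < k)" for j k
      using that unfolding parking_graphs_on_def assignments_on_def by blast
    then show "P \<in> {P. \<forall>j. (j \<in> V \<longrightarrow> P j \<in> B) \<and> (j \<notin> V \<longrightarrow> P j = (\<lambda>_. Down))}"
      unfolding B_def by auto
  qed
  ultimately show ?thesis by (rule finite_subset[rotated])
qed

lemma finite_parking_functions_on:
  assumes "finite V"
  shows "finite (parking_functions_on V)"
proof -
  have "parking_functions_on V \<subseteq> {b. \<forall>x. (x \<in> V \<longrightarrow> b x \<in> {..<card V}) \<and> (x \<notin> V \<longrightarrow> b x = 0)}"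
    using parking_function_less_card[OF assms] parking_functions_onD(1) by blast
  moreover have "finite {b. \<forall>x. (x \<in> V \<longrightarrow> b x \<in> {..<card V}) \<and> (x \<notin> V \<longrightarrow> b x = (0::nat))}"
    by (rule finite_set_of_finite_funs[OF assms]) simp
  ultimately show ?thesis by (rule finite_subset)
qed

lemma parking_graphs_on_empty: "parking_graphs_on {} = {\<lambda>_ _. Down}"
  unfolding parking_graphs_on_def assignments_on_def arc_trans_on_def triangle_cond_def by auto

lemma parking_functions_on_empty: "parking_functions_on {} = {\<lambda>_. 0}"
  unfolding parking_functions_on_def by auto

lemma graph_word_nonempty:
  assumes "finite V" "V \<noteq> {}" "P \<in> parking_graphs_on V"
  shows "graph_word V P \<noteq> []"
proof -
  have trans: "arc_trans_on V P" using assms(3) unfolding parking_graphs_on_def by simp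
  let ?s = "vertex_of_rank V P 0"
  have "0 < card V" using assms(1,2) by (simp add: card_gt_0_iff)
  then have s: "?s \<in> V" "rank V P ?s = 0" using vertex_of_rank_spec[OF assms(1) trans] by auto
  have "P ?s y = Up" if "y \<in> V" "?s < y" for y
  proof -
    have "rank V P y \<noteq> 0" using rank_eq_iff[OF assms(1) trans that(1) s(1)] s(2) that(2) by simp
    then have "arc P ?s y" using arc_iff_rank_less[OF assms(1) trans s(1) that(1)] s(2) by simp
    then show ?thesis using that(2) unfolding arc_def by simp
  qed
  then have "down_free V P ?s" unfolding down_free_def by simp
  then have "word_length V P \<noteq> 0" using not_down_free_at_word_length[of V P] \<open>0 < card V\<close> by metis
  then show ?thesis using length_graph_word[of V P] by auto
qed

lemma pf_word_nonempty:
  assumes "finite V" "V \<noteq> {}" "b \<in> parking_functions_on V"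
  shows "pf_word V b \<noteq> []"
proof -
  have "1 \<le> card V" using assms(1,2) by (simp add: Suc_le_eq card_gt_0_iff)
  then have "1 \<le> card {x\<in>V. b x < 1}" using parking_functions_onD(2)[OF assms(3)] by blast
  moreover have "{x\<in>V. b x < 1} = block V b 0" unfolding block_def by auto
  ultimately have "block V b 0 \<noteq> {}" by auto
  then have "num_blocks V b \<noteq> 0" using block_num_blocks[OF assms(1,3)] by metis
  then show ?thesis using length_pf_word[of V b] by auto
qed

lemma card_word_Nil:
  assumes "finite V"
  shows "card {P \<in> parking_graphs_on V. graph_word V P = []}
       = card {b \<in> parking_functions_on V. pf_word V b = []}"
proof (cases "V = {}")
  case True
  have "graph_word {} P = []" "pf_word {} b = []" for P b
    using word_length_le[of "{}" P] num_blocks_eqI[of "{}" b 0]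
    by (simp_all add: graph_word_def pf_word_def block_def)
  with True show ?thesis by (simp add: parking_graphs_on_empty parking_functions_on_empty)
next
  case False
  then have empty: "{P \<in> parking_graphs_on V. graph_word V P = []} = {}"
    "{b \<in> parking_functions_on V. pf_word V b = []} = {}"
    using graph_word_nonempty[OF assms] pf_word_nonempty[OF assms] by auto
  show ?thesis unfolding empty by simp
qed

lemma card_filter_eq_if_fibres_eq:
  assumes "finite A" "finite B" "\<And>y. card {a\<in>A. f a = y} = card {b\<in>B. g b = y}"
  shows "card {a\<in>A. f a \<in> S} = card {b\<in>B. g b \<in> S}"
proof -
  let ?I = "S \<inter> (f ` A \<union> g ` B)"
  have "card {a\<in>A. f a \<in> S} = card (\<Union>y\<in>?I. {a\<in>A. f a = y})"
    by (rule arg_cong[where f = card]) auto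
  also have "\<dots> = (\<Sum>y\<in>?I. card {a\<in>A. f a = y})"
    using assms(1,2) by (intro card_UN_disjoint) auto
  also have "\<dots> = (\<Sum>y\<in>?I. card {b\<in>B. g b = y})" using assms(3) by simp
  also have "\<dots> = card (\<Union>y\<in>?I. {b\<in>B. g b = y})"
    using assms(1,2) by (intro card_UN_disjoint[symmetric]) auto
  also have "\<dots> = card {b\<in>B. g b \<in> S}"
    by (rule arg_cong[where f = card]) auto
  finally show ?thesis .
qed

lemma card_graph_word_eq_card_pf_word:
  assumes "finite V"
  shows "card {P \<in> parking_graphs_on V. graph_word V P = \<sigma>}
       = card {b \<in> parking_functions_on V. pf_word V b = \<sigma>}"
  using assms
proof (induction "card V" arbitrary: V \<sigma> rule: less_induct)
  case less
  show ?case
  proof (cases \<sigma>)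
    case Nil
    then show ?thesis using card_word_Nil[OF less.prems] by simp
  next
    case (Cons u \<tau>)
    show ?thesis
    proof (cases "u \<in> V")
      case True
      have "card (V - {u}) < card V" using card_Diff1_less[OF less.prems True] .
      then have IH: "\<And>\<sigma>. card {P \<in> parking_graphs_on (V - {u}). graph_word (V - {u}) P = \<sigma>}
          = card {b \<in> parking_functions_on (V - {u}). pf_word (V - {u}) b = \<sigma>}"
        using less by simp
      show ?thesis
        unfolding Cons card_graph_word_Cons[OF less.prems True] card_pf_word_Cons[OF less.prems True]
        using less.prems by (intro card_filter_eq_if_fibres_eq IH)
          (simp_all add: finite_parking_graphs_on finite_parking_functions_on)
    next
      case False
      then have empty: "{P \<in> parking_graphs_on V. graph_word V P = \<sigma>} = {}"
        "{b \<in> parking_functions_on V. pf_word V b = \<sigma>} = {}"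
        using Cons graph_word_ConsD(1)[OF less.prems] pf_word_ConsD(2)[OF less.prems] by blast+
      show ?thesis unfolding empty by simp
    qed
  qed
qed

lemma card_parking_graphs_on:
  "finite V \<Longrightarrow> card (parking_graphs_on V) = card (parking_functions_on V)"
  using card_filter_eq_if_fibres_eq[of "parking_graphs_on V" "parking_functions_on V"
      "graph_word V" "pf_word V" UNIV]
  by (simp add: finite_parking_graphs_on finite_parking_functions_on card_graph_word_eq_card_pf_word)

section \<open>Counting parking functions\<close>

lemma mod_add_cancel_shift:
  fixes x s q :: nat
  assumes "x < q" "s \<le> q"
  shows "((x + s) mod q + (q - s)) mod q = x" "((x + (q - s)) mod q + s) mod q = x"
proof -
  have "((x + s) mod q + (q - s)) mod q = (x + s + (q - s)) mod q" by (simp add: mod_add_left_eq)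
  also have "\<dots> = x" using assms by simp
  finally show "((x + s) mod q + (q - s)) mod q = x" .
  have "((x + (q - s)) mod q + s) mod q = (x + (q - s) + s) mod q" by (simp add: mod_add_left_eq)
  also have "\<dots> = x" using assms by simp
  finally show "((x + (q - s)) mod q + s) mod q = x" .
qed

lemma mod_add_diff_eq_iff:
  fixes v i s q :: nat
  assumes "v < q" "i < q" "s \<le> q"
  shows "(v + (q - s)) mod q = i \<longleftrightarrow> v = (i + s) mod q"
  using mod_add_cancel_shift[OF assms(1,3)] mod_add_cancel_shift[OF assms(2,3)] by metis

definition excess :: "nat \<Rightarrow> (nat \<Rightarrow> nat) \<Rightarrow> nat \<Rightarrow> int" where
  "excess q a m = (\<Sum>i<m. int (a (i mod q)) - 1)"

lemma excess_add: "excess q a (m + k) = excess q a m + (\<Sum>i<k. int (a ((m + i) mod q)) - 1)"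
proof -
  have "excess q a (m + k) = excess q a m + (\<Sum>i\<in>{m..<m + k}. int (a (i mod q)) - 1)"
    unfolding excess_def
    using sum.atLeastLessThan_concat[of 0 m "m + k" "\<lambda>i. int (a (i mod q)) - 1"]
    by (simp add: atLeast0LessThan)
  also have "(\<Sum>i\<in>{m..<m + k}. int (a (i mod q)) - 1) = (\<Sum>i\<in>{0..<k}. int (a ((i + m) mod q)) - 1)"
    using sum.shift_bounds_nat_ivl[of "\<lambda>i. int (a (i mod q)) - 1" 0 m k] by (simp add: add.commute)
  finally show ?thesis by (simp add: atLeast0LessThan add.commute)
qed

lemma excess_period:
  assumes "(\<Sum>v<q. a v) = q - 1" "0 < q"
  shows "excess q a (q + m) = excess q a m - 1"
proof -
  have "excess q a q = int (\<Sum>v<q. a v) - int q" unfolding excess_def by (simp add: sum_subtractf)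
  then have "excess q a q = -1" using assms by simp
  moreover have "(\<Sum>i<m. int (a ((q + i) mod q)) - 1) = excess q a m" unfolding excess_def by simp
  ultimately show ?thesis using excess_add[of q a q m] by simp
qed

definition good_start :: "nat \<Rightarrow> (nat \<Rightarrow> nat) \<Rightarrow> nat \<Rightarrow> bool" where
  "good_start q a s = (\<forall>k<q. k \<le> (\<Sum>i<k. a ((s + i) mod q)))"

lemma good_start_iff_excess: "good_start q a s \<longleftrightarrow> (\<forall>k<q. excess q a s \<le> excess q a (s + k))"
proof -
  have "k \<le> (\<Sum>i<k. a ((s + i) mod q)) \<longleftrightarrow> int k \<le> (\<Sum>i<k. int (a ((s + i) mod q)))" for k
    by (metis of_nat_le_iff of_nat_sum)
  also have "\<dots> k \<longleftrightarrow> excess q a s \<le> excess q a (s + k)" for k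
    using excess_add[of q a s k] by (simp add: sum_subtractf)
  finally have "k \<le> (\<Sum>i<k. a ((s + i) mod q)) \<longleftrightarrow> excess q a s \<le> excess q a (s + k)" for k .
  then show ?thesis unfolding good_start_def by simp
qed

lemma good_start_iff_first_minimum:
  assumes q: "0 < q" and total: "(\<Sum>v<q. a v) = q - 1" and "s < q"
  shows "good_start q a s \<longleftrightarrow>
    (\<forall>i<q. excess q a s \<le> excess q a i) \<and> (\<forall>i<s. excess q a s < excess q a i)"
proof
  assume "good_start q a s"
  then have le: "\<And>k. k < q \<Longrightarrow> excess q a s \<le> excess q a (s + k)"
    unfolding good_start_iff_excess by blast
  have below: "excess q a s < excess q a i" if "i < s" for i
    using le[of "q + i - s"] \<open>s < q\<close> that excess_period[OF total q, of i] by simp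
  moreover have "excess q a s \<le> excess q a i" if "i < q" for i
    using le[of "i - s"] that below[of i] by (cases "s \<le> i") auto
  ultimately show "(\<forall>i<q. excess q a s \<le> excess q a i) \<and> (\<forall>i<s. excess q a s < excess q a i)"
    by blast
next
  assume min: "(\<forall>i<q. excess q a s \<le> excess q a i) \<and> (\<forall>i<s. excess q a s < excess q a i)"
  show "good_start q a s"
    unfolding good_start_iff_excess
  proof (intro allI impI)
    fix k assume "k < q"
    show "excess q a s \<le> excess q a (s + k)"
    proof (cases "s + k < q")
      case False
      with \<open>k < q\<close> have "s + k = q + (s + k - q)" "s + k - q < s" by auto
      with min show ?thesis using excess_period[OF total q, of "s + k - q"] by fastforce
    qed (use min in blast)
  qed
qed

lemma cycle_lemma:
  assumes q: "0 < q" and total: "(\<Sum>v<q. a v) = q - 1"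
  shows "\<exists>!s. s < q \<and> good_start q a s"
proof -
  let ?e = "excess q a"
  define m where "m = Min (?e ` {..<q})"
  have "m \<in> ?e ` {..<q}" unfolding m_def using q by (intro Min_in) auto
  then have ex: "\<exists>i. i < q \<and> ?e i = m" by auto
  define s0 where "s0 = (LEAST i. i < q \<and> ?e i = m)"
  have s0: "s0 < q" "?e s0 = m" using LeastI_ex[OF ex] unfolding s0_def by auto
  have min: "m \<le> ?e i" if "i < q" for i unfolding m_def using that by simp
  have "?e i \<noteq> m" if "i < s0" for i
    using not_less_Least[OF that[unfolded s0_def]] that s0(1) by simp
  then have "?e s0 < ?e i" if "i < s0" for i using min[of i] that s0 by fastforce
  with min s0 have "good_start q a s0"
    using good_start_iff_first_minimum[OF q total s0(1)] by simp
  moreover have "s = s0" if "s < q" "good_start q a s" for s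
    using that \<open>s0 < q\<close> \<open>good_start q a s0\<close> good_start_iff_first_minimum[OF q total]
    by (metis linorder_neqE_nat not_less)
  ultimately show ?thesis using \<open>s0 < q\<close> by blast
qed

definition preference_functions :: "nat set \<Rightarrow> (nat \<Rightarrow> nat) set" where
  "preference_functions V = {f. (\<forall>x. x \<notin> V \<longrightarrow> f x = 0) \<and> (\<forall>x\<in>V. f x < Suc (card V))}"

definition shift_down :: "nat set \<Rightarrow> nat \<Rightarrow> (nat \<Rightarrow> nat) \<Rightarrow> nat \<Rightarrow> nat" where
  "shift_down V s f = (\<lambda>x. if x \<in> V then (f x + (Suc (card V) - s)) mod Suc (card V) else 0)"

definition shift_up :: "nat set \<Rightarrow> nat \<Rightarrow> (nat \<Rightarrow> nat) \<Rightarrow> nat \<Rightarrow> nat" where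
  "shift_up V s b = (\<lambda>x. if x \<in> V then (b x + s) mod Suc (card V) else 0)"

definition value_count :: "nat set \<Rightarrow> (nat \<Rightarrow> nat) \<Rightarrow> nat \<Rightarrow> nat" where
  "value_count V f v = card {x\<in>V. f x = v}"

lemma sum_value_count:
  assumes "finite V" "f \<in> preference_functions V"
  shows "(\<Sum>v<Suc (card V). value_count V f v) = card V"
proof -
  have "V = (\<Union>v<Suc (card V). {x\<in>V. f x = v})"
    using assms(2) unfolding preference_functions_def by auto
  also have "card \<dots> = (\<Sum>v<Suc (card V). value_count V f v)"
    unfolding value_count_def using assms(1) by (intro card_UN_disjoint) auto
  finally show ?thesis by simp
qed

lemma card_shift_down_less:
  assumes fin: "finite V" and f: "f \<in> preference_functions V" and "s < Suc (card V)" "k < Suc (card V)"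
  shows "card {x\<in>V. shift_down V s f x < k} = (\<Sum>i<k. value_count V f ((s + i) mod Suc (card V)))"
proof -
  let ?q = "Suc (card V)"
  have shift: "(f x + (?q - s)) mod ?q = i \<longleftrightarrow> f x = (i + s) mod ?q" if "x \<in> V" "i < k" for x i
    using mod_add_diff_eq_iff[of "f x" ?q i s] f that assms(3,4) unfolding preference_functions_def by simp
  have "{x\<in>V. shift_down V s f x < k} = (\<Union>i<k. {x\<in>V. f x = (i + s) mod ?q})"
  proof (rule set_eqI)
    fix x show "x \<in> {x\<in>V. shift_down V s f x < k} \<longleftrightarrow> x \<in> (\<Union>i<k. {x\<in>V. f x = (i + s) mod ?q})"
      using shift[of x] unfolding shift_down_def by auto
  qed
  also have "card \<dots> = (\<Sum>i<k. card {x\<in>V. f x = (i + s) mod ?q})"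
    using fin shift by (intro card_UN_disjoint) auto
  finally show ?thesis unfolding value_count_def by (simp add: add.commute)
qed

lemma shift_down_in_parking_functions_iff:
  assumes "finite V" "f \<in> preference_functions V" "s < Suc (card V)"
  shows "shift_down V s f \<in> parking_functions_on V \<longleftrightarrow> good_start (Suc (card V)) (value_count V f) s"
  unfolding parking_functions_on_def good_start_def
  using card_shift_down_less[OF assms] by (auto simp: shift_down_def less_Suc_eq_le)

lemma shift_down_shift_up:
  assumes "finite V" "b \<in> parking_functions_on V" "s < Suc (card V)"
  shows "shift_down V s (shift_up V s b) = b"
proof
  fix x
  show "shift_down V s (shift_up V s b) x = b x"
  proof (cases "x \<in> V")
    case True
    then have "b x < Suc (card V)" using parking_function_less_card[OF assms(1,2)] by fastforce
    have "shift_down V s (shift_up V s b) x = ((b x + s) mod Suc (card V) + (Suc (card V) - s)) mod Suc (card V)"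
      using True unfolding shift_down_def shift_up_def by simp
    also have "\<dots> = b x"
      by (rule mod_add_cancel_shift(1)[OF \<open>b x < Suc (card V)\<close>]) (use assms(3) in simp)
    finally show ?thesis .
  qed (simp add: shift_down_def parking_functions_onD(1)[OF assms(2)])
qed

lemma shift_up_shift_down:
  assumes "f \<in> preference_functions V" "s < Suc (card V)"
  shows "shift_up V s (shift_down V s f) = f"
proof
  fix x
  show "shift_up V s (shift_down V s f) x = f x"
  proof (cases "x \<in> V")
    case True
    then have "f x < Suc (card V)" using assms(1) unfolding preference_functions_def by simp
    have "shift_up V s (shift_down V s f) x = ((f x + (Suc (card V) - s)) mod Suc (card V) + s) mod Suc (card V)"
      using True unfolding shift_down_def shift_up_def by simp
    also have "\<dots> = f x"
      by (rule mod_add_cancel_shift(2)[OF \<open>f x < Suc (card V)\<close>]) (use assms(2) in simp)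
    finally show ?thesis .
  qed (use assms(1) in \<open>simp add: shift_up_def preference_functions_def\<close>)
qed

lemma shift_up_in_preference_functions: "shift_up V s b \<in> preference_functions V"
  unfolding shift_up_def preference_functions_def by auto

lemma card_preference_functions:
  assumes "finite V"
  shows "card (preference_functions V) = Suc (card V) ^ card V"
proof -
  have "bij_betw (\<lambda>f. restrict f V) (preference_functions V) (V \<rightarrow>\<^sub>E {..<Suc (card V)})"
    by (rule bij_betw_byWitness[where f'="\<lambda>g x. if x \<in> V then g x else 0"])
      (auto simp: preference_functions_def PiE_def Pi_def extensional_def intro!: ext)
  then show ?thesis using card_PiE[OF assms, of "\<lambda>_. {..<Suc (card V)}"] by (simp add: bij_betw_same_card)
qed

lemma card_parking_functions_on_mult:
  assumes fin: "finite V"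
  shows "card (parking_functions_on V) * Suc (card V) = Suc (card V) ^ card V"
proof -
  let ?q = "Suc (card V)"
  have ex1: "\<exists>!s. s < ?q \<and> shift_down V s f \<in> parking_functions_on V" if "f \<in> preference_functions V" for f
    using cycle_lemma[of ?q "value_count V f"] sum_value_count[OF fin that]
      shift_down_in_parking_functions_iff[OF fin that] by auto
  define start where "start f = (THE s. s < ?q \<and> shift_down V s f \<in> parking_functions_on V)" for f
  have start: "start f < ?q" "shift_down V (start f) f \<in> parking_functions_on V"
    if "f \<in> preference_functions V" for f
    using theI'[OF ex1[OF that]] unfolding start_def by auto
  have start_eq: "start f = s" if "f \<in> preference_functions V" "s < ?q" "shift_down V s f \<in> parking_functions_on V" for f s
    using the1_equality[OF ex1[OF that(1)]] that(2,3) unfolding start_def by blast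
  have "bij_betw (\<lambda>(b, s). shift_up V s b) (parking_functions_on V \<times> {..<?q}) (preference_functions V)"
    by (rule bij_betw_byWitness[where f'="\<lambda>f. (shift_down V (start f) f, start f)"])
      (auto simp: shift_down_shift_up[OF fin] shift_up_shift_down start start_eq shift_up_in_preference_functions)
  then have "card (parking_functions_on V \<times> {..<?q}) = card (preference_functions V)"
    by (rule bij_betw_same_card)
  then show ?thesis using card_preference_functions[OF fin] by (simp add: card_cartesian_product)
qed

lemma card_parking_functions_on:
  assumes "finite V" "card V \<ge> 1"
  shows "card (parking_functions_on V) = Suc (card V) ^ (card V - 1)"
proof -
  have "card (parking_functions_on V) * Suc (card V) = Suc (card V) ^ (card V - 1) * Suc (card V)"
    using card_parking_functions_on_mult[OF assms(1)] assms(2)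
    by (metis Suc_diff_le diff_Suc_1 mult.commute power_Suc)
  then show ?thesis by (simp only: mult_cancel_right) simp
qed

theorem theorem1p4:
  fixes n :: nat
  assumes "n \<ge> 1"
  shows "card (parking_graphs n) = (n + 1) ^ (n - 1)"
  using card_parking_graphs_on[of "{1..n}"] card_parking_functions_on[of "{1..n}"] assms
  by (simp add: parking_graphs_eq)

end
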